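(* Let $p$ be a prime, $\alpha\in\mathbb{N}$, $r\in\mathbb{Z}$, and let $f(x)\in\mathbb{Z}_p[x]$ with $\deg f=l\in\mathbb{N}$. Then there is a sequence $(a_k)_{k\in\mathbb{N}}$ of $p$-adic integers such that for every $n\in\mathbb{N}$, $$\sum_{k=0}^n\binom nk(-1)^k\Big\lfloor\frac k{p^{\alpha-1}}\Big\rfloor!\binom{\{r\}_{p^{\alpha-1}}+\{k-r\}_{p^{\alpha-1}}}{\{r\}_{p^{\alpha-1}}}a_k=\begin{cases}p^lf\big(\frac{n-r}{p^{\alpha}}\big)&\text{if } n\equiv r\pmod{p^{\alpha}},\\ 0&\text{otherwise}.\end{cases}$$
   Context: For an integer $a$ and positive real $m$, $\{a\}_m$ is the unique number in $[0,m)$ with $a-\{a\}_m\in m\mathbb{Z}$ (so $\{a\}_{p^{-1}}=0$). When $\alpha=0$, $\lfloor k/p^{-1}\rfloor=pk$. $\mathbb{Z}_p$ denotes the $p$-adic integers. *)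

theory Defs
  imports Main "HOL-Number_Theory.Cong"
begin

text \<open>p-adic integers, modelled by the standard inverse-limit construction:
  a p-adic integer is a sequence x :: nat => int of truncations that is compatible,
  i.e. x (m+1) = x m (mod p^m); two such sequences represent the same p-adic integer
  iff they agree modulo p^m for every m.  Ring operations (and hence sums, products,
  integer scalars, polynomial evaluation at an integer) are computed componentwise.\<close>

definition padic_int :: "nat \<Rightarrow> (nat \<Rightarrow> int) \<Rightarrow> bool" where
  "padic_int p x \<longleftrightarrow> (\<forall>m. [x (Suc m) = x m] (mod int p ^ m))"

definition padic_eq :: "nat \<Rightarrow> (nat \<Rightarrow> int) \<Rightarrow> (nat \<Rightarrow> int) \<Rightarrow> bool" where
  "padic_eq p x y \<longleftrightarrow> (\<forall>m. [x m = y m] (mod int p ^ m))"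

text \<open>floor(k / p^(alpha-1)), with the convention floor(k / p^(-1)) = p k when alpha = 0.\<close>
definition flr :: "nat \<Rightarrow> nat \<Rightarrow> nat \<Rightarrow> nat" where
  "flr p \<alpha> k = (if \<alpha> = 0 then p * k else k div p ^ (\<alpha> - 1))"

text \<open>{a}_(p^(alpha-1)), with {a}_(p^(-1)) = 0 when alpha = 0.\<close>
definition frc :: "nat \<Rightarrow> nat \<Rightarrow> int \<Rightarrow> int" where
  "frc p \<alpha> a = (if \<alpha> = 0 then 0 else a mod (int p ^ (\<alpha> - 1)))"

definition lhs_comp :: "nat \<Rightarrow> nat \<Rightarrow> int \<Rightarrow> (nat \<Rightarrow> nat \<Rightarrow> int) \<Rightarrow> nat \<Rightarrow> nat \<Rightarrow> int" where
  "lhs_comp p \<alpha> r a n m =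
     (\<Sum>k=0..n. int (n choose k) * (-1) ^ k * int (fact (flr p \<alpha> k))
        * int (nat (frc p \<alpha> r + frc p \<alpha> (int k - r)) choose nat (frc p \<alpha> r)) * a k m)"

text \<open>m-th component of the right-hand side; f = sum_{i<=l} c_i x^i.\<close>
definition rhs_comp :: "nat \<Rightarrow> nat \<Rightarrow> int \<Rightarrow> nat \<Rightarrow> (nat \<Rightarrow> nat \<Rightarrow> int) \<Rightarrow> nat \<Rightarrow> nat \<Rightarrow> int" where
  "rhs_comp p \<alpha> r l c n m =
     (if [int n = r] (mod int p ^ \<alpha>)
      then int p ^ l * (\<Sum>i\<le>l. c i m * ((int n - r) div int p ^ \<alpha>) ^ i)
      else 0)"

end

theory Submission
  imports Defs "HOL-Number_Theory.Number_Theory"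
begin

text \<open>
  Write \<open>w k = \<lfloor>k / p^(\<alpha>-1)\<rfloor>! * (binomial)\<close> for the weight in the statement.  The binomial
  transform \<open>g \<mapsto> (\<lambda>k. \<Sum>j\<le>k. (k choose j) (-1)^j g j)\<close> is an involution, so the identity says that
  \<open>w k * a k\<close> is the \<open>k\<close>-th transform of the right-hand side.  The prime-to-\<open>p\<close> part of \<open>w k\<close> is a
  \<open>p\<close>-adic unit, so a solution exists as soon as the \<open>p\<close>-part of \<open>w k\<close> divides that transform.
  By linearity it suffices to treat \<open>n \<mapsto> p^i ((n - r) / p^\<alpha>)^i\<close> on the progression
  \<open>n \<equiv> r (mod p^\<alpha>)\<close>, by induction on \<open>\<alpha>\<close>.  For \<open>\<alpha> = 0\<close> one expands in falling factorials, whose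
  transforms are \<open>\<plusminus>k!\<close> or \<open>0\<close>, and uses \<open>v\<^sub>p((pk)!) = k + v\<^sub>p(k!)\<close>.  For \<open>\<alpha> + 1\<close> put \<open>q = p^\<alpha>\<close> and
  \<open>r = q c + b\<close>: Euler's theorem makes the indicator of \<open>p dvd (n div q - c)\<close> a polynomial modulo
  any \<open>p^e\<close>, which reduces everything to the falling factorials of \<open>n div q\<close> on \<open>n \<equiv> b (mod q)\<close>.
  For degree \<open>u \<ge> k div q\<close> their transform has a single term, controlled by Kummer's theorem; for
  smaller \<open>u\<close> one expands in powers and applies the induction hypothesis, since by Legendre's and
  Kummer's formulas the weight at \<open>\<alpha>\<close> has at least \<open>k div q - 1\<close> more factors \<open>p\<close> than at \<open>\<alpha> + 1\<close>.
\<close>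

section \<open>Binomial transform and falling factorials\<close>

definition binomial_transform :: "(nat \<Rightarrow> 'a::comm_ring_1) \<Rightarrow> nat \<Rightarrow> 'a" where
  "binomial_transform g k = (\<Sum>j=0..k. of_nat (k choose j) * (-1) ^ j * g j)"

lemma binomial_transform_0 [simp]: "binomial_transform g 0 = g 0"
  by (simp add: binomial_transform_def)

lemma binomial_transform_Suc:
  "binomial_transform g (Suc k) = binomial_transform g k - binomial_transform (\<lambda>j. g (Suc j)) k"
proof -
  have shift: "(\<Sum>j=0..Suc k. of_nat (n choose j) * (-1) ^ j * g j)
      = g 0 + (\<Sum>j=0..k. of_nat (n choose Suc j) * (-1) ^ Suc j * g (Suc j))" for n
    by (subst sum.atLeast0_atMost_Suc_shift) simp
  have pascal: "(\<Sum>j=0..k. of_nat (Suc k choose Suc j) * (-1) ^ Suc j * g (Suc j))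
      = (\<Sum>j=0..k. of_nat (k choose Suc j) * (-1) ^ Suc j * g (Suc j))
      - (\<Sum>j=0..k. of_nat (k choose j) * (-1) ^ j * g (Suc j))"
    unfolding sum_subtractf[symmetric] by (intro sum.cong) (simp_all add: algebra_simps)
  have "binomial_transform g k = (\<Sum>j=0..Suc k. of_nat (k choose j) * (-1) ^ j * g j)"
    by (simp add: binomial_transform_def binomial_eq_0)
  then show ?thesis
    using shift[of "Suc k"] shift[of k] pascal by (simp add: binomial_transform_def)
qed

lemma binomial_transform_sum:
  "binomial_transform (\<lambda>j. \<Sum>i\<in>I. f i j) k = (\<Sum>i\<in>I. binomial_transform (f i) k)"
  unfolding binomial_transform_def by (simp add: sum_distrib_left sum.swap[of _ I] mult.assoc)

lemma binomial_transform_cmult: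
  "binomial_transform (\<lambda>j. c * g j) k = c * binomial_transform g k"
  unfolding binomial_transform_def by (simp add: sum_distrib_left algebra_simps)

lemma binomial_transform_add:
  "binomial_transform (\<lambda>j. g j + h j) k = binomial_transform g k + binomial_transform h k"
  unfolding binomial_transform_def by (simp add: sum.distrib algebra_simps)

lemma binomial_transform_diff:
  "binomial_transform (\<lambda>j. g j - h j) k = binomial_transform g k - binomial_transform h k"
  unfolding binomial_transform_def by (simp add: sum_subtractf algebra_simps)

lemma cong_binomial_transform:
  "(\<And>j. j \<le> k \<Longrightarrow> [g j = h j] (mod m)) \<Longrightarrow>
   [binomial_transform g k = binomial_transform h k] (mod m)"
  for g h :: "nat \<Rightarrow> int"
  unfolding binomial_transform_def by (intro cong_sum cong_mult cong_refl) auto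

lemma binomial_transform_single:
  assumes "\<And>j. j \<le> k \<Longrightarrow> j \<noteq> j0 \<Longrightarrow> g j = 0"
  shows "binomial_transform g k = (if j0 \<le> k then of_nat (k choose j0) * (-1) ^ j0 * g j0 else 0)"
proof -
  have "binomial_transform g k = (\<Sum>j=0..k. if j = j0 then of_nat (k choose j) * (-1) ^ j * g j else 0)"
    unfolding binomial_transform_def using assms by (intro sum.cong) auto
  then show ?thesis by (simp add: sum.delta')
qed

lemma binomial_transform_involution:
  "binomial_transform (binomial_transform g) n = g n"
proof (induction n arbitrary: g)
  case (Suc n)
  let ?T = binomial_transform and ?g' = "\<lambda>j. g (Suc j)"
  have "?T (?T g) (Suc n) = ?T (?T g) n - ?T (\<lambda>j. ?T g (Suc j)) n"
    by (rule binomial_transform_Suc)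
  also have "?T (\<lambda>j. ?T g (Suc j)) n = ?T (\<lambda>j. ?T g j - ?T ?g' j) n"
    by (simp add: binomial_transform_Suc)
  also have "\<dots> = g n - g (Suc n)"
    by (simp add: binomial_transform_diff Suc.IH)
  finally show ?case by (simp add: Suc.IH)
qed simp

definition falling_fact :: "'a::comm_ring_1 \<Rightarrow> nat \<Rightarrow> 'a" where
  "falling_fact x u = (\<Prod>t<u. x - of_nat t)"

lemma falling_fact_0 [simp]: "falling_fact x 0 = 1"
  by (simp add: falling_fact_def)

lemma falling_fact_Suc: "falling_fact x (Suc u) = falling_fact x u * (x - of_nat u)"
  by (simp add: falling_fact_def)

lemma falling_fact_plus_one:
  "falling_fact (x + 1) (Suc u) = falling_fact x (Suc u) + of_nat (Suc u) * falling_fact x u"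
proof (induction u)
  case (Suc u)
  have "falling_fact (x + 1) (Suc (Suc u)) = falling_fact (x + 1) (Suc u) * (x - of_nat u)"
    by (simp only: falling_fact_Suc[of "x + 1" "Suc u"]) (simp add: algebra_simps)
  also have "\<dots> = (falling_fact x (Suc u) + of_nat (Suc u) * falling_fact x u) * (x - of_nat u)"
    by (simp only: Suc)
  also have "\<dots> = falling_fact x (Suc (Suc u)) + of_nat (Suc (Suc u)) * falling_fact x (Suc u)"
    by (simp add: falling_fact_Suc algebra_simps)
  finally show ?case .
qed (simp add: falling_fact_Suc)

lemma falling_fact_of_nat_eq_0: "x < u \<Longrightarrow> falling_fact (of_nat x) u = 0"
  unfolding falling_fact_def by (rule prod_zero) auto

lemma falling_fact_of_nat_self: "falling_fact (of_nat n) n = fact n"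
proof (induction n)
  case (Suc n)
  have "falling_fact (of_nat (Suc n)) (Suc n) = falling_fact (of_nat n + 1 :: 'a) (Suc n)"
    by (simp add: add.commute)
  also have "\<dots> = of_nat (Suc n) * fact n"
    by (simp only: falling_fact_plus_one Suc falling_fact_of_nat_eq_0 lessI) simp
  finally show ?case by simp
qed simp

lemma binomial_transform_falling_fact:
  "binomial_transform (\<lambda>j. falling_fact (of_nat j) u) k = (if u = k then (-1) ^ k * fact k else 0)"
proof (induction k arbitrary: u)
  case 0
  then show ?case by (cases u) (simp_all add: falling_fact_of_nat_eq_0[of 0, simplified])
next
  case (Suc k)
  show ?case
  proof (cases u)
    case 0
    then show ?thesis using binomial_transform_Suc[of "\<lambda>j. falling_fact (of_nat j) 0" k] by simp
  next
    case (Suc v)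
    have shift: "falling_fact (of_nat (Suc j) :: 'a) u
        = falling_fact (of_nat j) u + of_nat u * falling_fact (of_nat j) v" for j
      using falling_fact_plus_one[of "of_nat j :: 'a" v] Suc by (simp add: add.commute)
    have "binomial_transform (\<lambda>j. falling_fact (of_nat j :: 'a) u) (Suc k)
        = - of_nat u * binomial_transform (\<lambda>j. falling_fact (of_nat j) v) k"
      by (simp only: binomial_transform_Suc shift binomial_transform_add binomial_transform_cmult)
        simp
    then show ?thesis using Suc.IH[of v] Suc by (auto simp: algebra_simps)
  qed
qed

lemma power_diff_eq_falling_fact_combination:
  "\<exists>d. \<forall>x. (x - c) ^ e = (\<Sum>u\<le>e. d u * falling_fact x u)"
proof (induction e)
  case 0
  show ?case by (rule exI[of _ "\<lambda>_. 1"]) simp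
next
  case (Suc e)
  then obtain d where d: "\<And>x :: 'a. (x - c) ^ e = (\<Sum>u\<le>e. d u * falling_fact x u)" by blast
  define d' where
    "d' u = (if u = 0 then 0 else d (u - 1)) + (if u \<le> e then d u * (of_nat u - c) else 0)" for u
  have "(x - c) ^ Suc e = (\<Sum>u\<le>Suc e. d' u * falling_fact x u)" for x
  proof -
    have raise: "(\<Sum>u\<le>Suc e. (if u = 0 then 0 else d (u - 1)) * falling_fact x u)
        = (\<Sum>u\<le>e. d u * falling_fact x (Suc u))"
      by (subst sum.atMost_Suc_shift) simp
    have keep: "(\<Sum>u\<le>Suc e. (if u \<le> e then d u * (of_nat u - c) else 0) * falling_fact x u)
        = (\<Sum>u\<le>e. d u * (of_nat u - c) * falling_fact x u)"
      by (simp add: sum.atMost_Suc)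
    have "(\<Sum>u\<le>Suc e. d' u * falling_fact x u)
        = (\<Sum>u\<le>Suc e. (if u = 0 then 0 else d (u - 1)) * falling_fact x u)
        + (\<Sum>u\<le>Suc e. (if u \<le> e then d u * (of_nat u - c) else 0) * falling_fact x u)"
      unfolding d'_def sum.distrib[symmetric] by (intro sum.cong) (simp_all add: algebra_simps)
    also have "\<dots> = (\<Sum>u\<le>e. d u * falling_fact x (Suc u) + d u * (of_nat u - c) * falling_fact x u)"
      unfolding raise keep sum.distrib ..
    also have "\<dots> = (\<Sum>u\<le>e. d u * falling_fact x u) * (x - c)"
      unfolding sum_distrib_right by (intro sum.cong) (simp_all add: falling_fact_Suc algebra_simps)
    finally show ?thesis by (simp add: d mult.commute)
  qed
  then show ?case by blast
qed

lemma falling_fact_eq_polynomial: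
  "\<exists>s. \<forall>x. falling_fact x u = (\<Sum>i\<le>u. s i * x ^ i)"
proof (induction u)
  case 0
  show ?case by (rule exI[of _ "\<lambda>_. 1"]) simp
next
  case (Suc u)
  then obtain s where s: "\<And>x :: 'a. falling_fact x u = (\<Sum>i\<le>u. s i * x ^ i)" by blast
  define s' where "s' i = (if i = 0 then 0 else s (i - 1)) - (if i \<le> u then of_nat u * s i else 0)" for i
  have "falling_fact x (Suc u) = (\<Sum>i\<le>Suc u. s' i * x ^ i)" for x
  proof -
    have raise: "(\<Sum>i\<le>Suc u. (if i = 0 then 0 else s (i - 1)) * x ^ i) = (\<Sum>i\<le>u. s i * x ^ Suc i)"
      by (subst sum.atMost_Suc_shift) simp
    have keep: "(\<Sum>i\<le>Suc u. (if i \<le> u then of_nat u * s i else 0) * x ^ i)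
        = (\<Sum>i\<le>u. of_nat u * s i * x ^ i)"
      by (simp add: sum.atMost_Suc)
    have "(\<Sum>i\<le>Suc u. s' i * x ^ i)
        = (\<Sum>i\<le>Suc u. (if i = 0 then 0 else s (i - 1)) * x ^ i)
        - (\<Sum>i\<le>Suc u. (if i \<le> u then of_nat u * s i else 0) * x ^ i)"
      unfolding s'_def sum_subtractf[symmetric] by (intro sum.cong) (simp_all add: algebra_simps)
    also have "\<dots> = (\<Sum>i\<le>u. s i * x ^ Suc i - of_nat u * s i * x ^ i)"
      unfolding raise keep sum_subtractf ..
    also have "\<dots> = (\<Sum>i\<le>u. s i * x ^ i) * (x - of_nat u)"
      unfolding sum_distrib_right by (intro sum.cong) (simp_all add: algebra_simps)
    finally show ?thesis by (simp add: s falling_fact_Suc)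
  qed
  then show ?case by blast
qed

section \<open>Valuations of factorials and binomial coefficients\<close>

lemma int_prime_power_dvd_iff:
  assumes "prime p" "x \<noteq> 0"
  shows "int p ^ e dvd int x \<longleftrightarrow> e \<le> multiplicity p x"
proof -
  have "int p ^ e dvd int x \<longleftrightarrow> p ^ e dvd x"
    by (simp flip: of_nat_power)
  also have "\<dots> \<longleftrightarrow> e \<le> multiplicity p x"
    using assms prime_gt_1_nat[OF assms(1)] by (intro power_dvd_iff_le_multiplicity) auto
  finally show ?thesis .
qed

lemma multiplicity_less_self:
  assumes "prime (p::nat)" "m \<noteq> 0"
  shows "multiplicity p m < m"
proof -
  have "multiplicity p m < 2 ^ multiplicity p m" by (rule less_exp)
  also have "\<dots> \<le> p ^ multiplicity p m"
    using prime_ge_2_nat[OF assms(1)] by (simp add: power_mono)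
  also have "\<dots> \<le> m"
    using assms(2) by (intro dvd_imp_le multiplicity_dvd) simp
  finally show ?thesis .
qed

lemma card_prime_powers_dvd:
  assumes p: "prime (p::nat)" and m: "m \<noteq> 0" "m \<le> B"
  shows "card {j\<in>{1..B}. p ^ j dvd m} = multiplicity p m"
proof -
  have dvd_iff: "p ^ j dvd m \<longleftrightarrow> j \<le> multiplicity p m" for j
    using m(1) prime_gt_1_nat[OF p] by (intro power_dvd_iff_le_multiplicity) auto
  have "{j\<in>{1..B}. p ^ j dvd m} = {1..multiplicity p m}"
    using multiplicity_less_self[OF p m(1)] m(2) unfolding dvd_iff by auto
  then show ?thesis by simp
qed

lemma legendre_formula:
  assumes "prime (p::nat)" "n \<le> B"
  shows "multiplicity p (fact n) = (\<Sum>j\<in>{1..B}. n div p ^ j)"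
  using assms(2)
proof (induction n)
  case (Suc n)
  have "multiplicity p (fact (Suc n)) = multiplicity p (Suc n) + multiplicity p (fact n :: nat)"
    using prime_elem_multiplicity_mult_distrib[of p "Suc n" "fact n"] assms(1)
    by (simp del: of_nat_Suc fact_Suc add: fact_Suc[of n])
  also have "multiplicity p (Suc n) = (\<Sum>j\<in>{1..B}. if p ^ j dvd Suc n then 1 else 0)"
    using card_prime_powers_dvd[OF assms(1), of "Suc n" B] Suc.prems
    by (simp add: sum.If_cases Int_def)
  also have "\<dots> + multiplicity p (fact n :: nat) = (\<Sum>j\<in>{1..B}. Suc n div p ^ j)"
    unfolding Suc.IH[OF Suc_leD[OF Suc.prems]] sum.distrib[symmetric]
    by (intro sum.cong refl) (simp add: div_Suc dvd_eq_mod_eq_0)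
  finally show ?case .
qed simp

lemma multiplicity_fact_prime_mult:
  assumes p: "prime (p::nat)"
  shows "multiplicity p (fact (p * K) :: nat) = K + multiplicity p (fact K :: nat)"
proof -
  have p2: "p \<ge> 2" using prime_ge_2_nat[OF p] .
  define B where "B = p * K"
  have "multiplicity p (fact (p * K) :: nat) = (\<Sum>j\<in>{1..Suc B}. (p * K) div p ^ j)"
    by (rule legendre_formula[OF p]) (simp add: B_def)
  also have "\<dots> = (\<Sum>j\<in>{0..B}. K div p ^ j)"
    using sum.shift_bounds_cl_Suc_ivl[of "\<lambda>j. (p * K) div p ^ j" 0 B] p2 by (simp add: div_mult2_eq)
  also have "\<dots> = K + (\<Sum>j\<in>{1..B}. K div p ^ j)"
    by (simp add: sum.atLeast_Suc_atMost)
  also have "(\<Sum>j\<in>{1..B}. K div p ^ j) = multiplicity p (fact K :: nat)"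
    using p2 by (intro legendre_formula[OF p, symmetric]) (simp add: B_def)
  finally show ?thesis .
qed

text \<open>Kummer's theorem: the \<open>j\<close>-th summand is the carry out of digit \<open>j - 1\<close> when adding \<open>x\<close> and
  \<open>y\<close> in base \<open>p\<close>.\<close>

lemma multiplicity_binomial_carries:
  assumes p: "prime (p::nat)" and B: "x + y \<le> B"
  shows "multiplicity p ((x + y) choose x) = (\<Sum>j\<in>{1..B}. (x mod p ^ j + y mod p ^ j) div p ^ j)"
proof -
  have "fact x * fact y * ((x + y) choose x) = (fact (x + y) :: nat)"
    using binomial_fact_lemma[of x "x + y"] by simp
  moreover have "multiplicity p (fact x * fact y * ((x + y) choose x) :: nat)
      = multiplicity p (fact x :: nat) + multiplicity p (fact y :: nat) + multiplicity p ((x + y) choose x)"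
    using p by (simp add: prime_elem_multiplicity_mult_distrib)
  ultimately have "multiplicity p (fact (x + y) :: nat)
      = multiplicity p (fact x :: nat) + multiplicity p (fact y :: nat) + multiplicity p ((x + y) choose x)"
    by simp
  moreover have "(\<Sum>j\<in>{1..B}. (x + y) div p ^ j) = (\<Sum>j\<in>{1..B}. x div p ^ j) + (\<Sum>j\<in>{1..B}. y div p ^ j)
       + (\<Sum>j\<in>{1..B}. (x mod p ^ j + y mod p ^ j) div p ^ j)"
    unfolding sum.distrib[symmetric] by (intro sum.cong refl) (rule div_add1_eq)
  ultimately show ?thesis
    using legendre_formula[OF p, of "x + y" B] legendre_formula[OF p, of x B]
      legendre_formula[OF p, of y B] B by simp
qed

lemma carry_le_1: "(a mod m + b mod m) div m \<le> (1::nat)"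
proof (cases "m = 0")
  case False
  then have "a mod m + b mod m < m * 2"
    using mod_less_divisor[of m a] mod_less_divisor[of m b] by linarith
  then have "(a mod m + b mod m) div m < 2"
    using False by (simp add: div_less_iff_less_mult)
  then show ?thesis by simp
qed simp

text \<open>Truncating two numbers below \<open>p ^ (d + 1)\<close> to their last \<open>d\<close> digits loses at most the carry
  out of digit \<open>d\<close>.\<close>

lemma multiplicity_binomial_le_truncation:
  assumes p: "prime (p::nat)" and b: "b < p ^ Suc d" and s: "s < p ^ Suc d"
  shows "multiplicity p ((b + s) choose b)
    \<le> multiplicity p ((b mod p ^ d + s mod p ^ d) choose (b mod p ^ d)) + 1"
proof -
  define B where "B = b + s"
  have p2: "p \<ge> 2" using prime_ge_2_nat[OF p] .
  have carry: "(b mod p ^ j + s mod p ^ j) div p ^ j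
        \<le> ((b mod p ^ d) mod p ^ j + (s mod p ^ d) mod p ^ j) div p ^ j + (if j = Suc d then 1 else 0)"
    for j
  proof -
    consider "j \<le> d" | "j = Suc d" | "j > Suc d" by linarith
    then show ?thesis
    proof cases
      case 1
      then have "p ^ j dvd p ^ d" by (simp add: le_imp_power_dvd)
      then show ?thesis by (simp add: mod_mod_cancel)
    next
      case 2
      then show ?thesis using carry_le_1[of b "p ^ j" s] by simp
    next
      case 3
      have "p ^ Suc d * 2 \<le> p ^ Suc (Suc d)" using p2 by simp
      also have "\<dots> \<le> p ^ j" using 3 p2 by (intro power_increasing) auto
      finally have "b + s < p ^ j" using b s by linarith
      then show ?thesis by simp
    qed
  qed
  have "multiplicity p ((b + s) choose b) = (\<Sum>j\<in>{1..B}. (b mod p ^ j + s mod p ^ j) div p ^ j)"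
    by (rule multiplicity_binomial_carries[OF p]) (simp add: B_def)
  also have "\<dots> \<le> (\<Sum>j\<in>{1..B}. ((b mod p ^ d) mod p ^ j + (s mod p ^ d) mod p ^ j) div p ^ j)
      + (\<Sum>j\<in>{1..B}. if j = Suc d then 1 else 0)"
    unfolding sum.distrib[symmetric] by (intro sum_mono carry)
  also have "(\<Sum>j\<in>{1..B}. if j = Suc d then 1 else 0) \<le> (1::nat)"
    by simp
  also have "(\<Sum>j\<in>{1..B}. ((b mod p ^ d) mod p ^ j + (s mod p ^ d) mod p ^ j) div p ^ j)
      = multiplicity p ((b mod p ^ d + s mod p ^ d) choose (b mod p ^ d))"
    by (intro multiplicity_binomial_carries[OF p, symmetric])
      (simp add: B_def add_le_mono[OF mod_less_eq_dividend mod_less_eq_dividend])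
  finally show ?thesis by simp
qed

text \<open>Prepending the same digits \<open>K\<close> above position \<open>d\<close> can only create carries.\<close>

lemma multiplicity_binomial_le_prepend:
  assumes p: "prime (p::nat)" and b: "b \<le> \<kappa>" and \<kappa>: "\<kappa> < p ^ d"
  shows "multiplicity p (\<kappa> choose b) \<le> multiplicity p ((p ^ d * K + \<kappa>) choose (p ^ d * K + b))"
proof -
  define B where "B = p ^ d * K + \<kappa>"
  have p2: "p \<ge> 2" using prime_ge_2_nat[OF p] .
  have carry: "(b mod p ^ j + (\<kappa> - b) mod p ^ j) div p ^ j
        \<le> ((p ^ d * K + b) mod p ^ j + (\<kappa> - b) mod p ^ j) div p ^ j" for j
  proof (cases "j \<le> d")
    case True
    then obtain c where "p ^ d = p ^ j * c" using le_imp_power_dvd by blast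
    then show ?thesis by (simp add: mult.assoc)
  next
    case False
    have "p ^ d \<le> p ^ j" using False p2 by (intro power_increasing) auto
    then show ?thesis using b \<kappa> by simp
  qed
  have "multiplicity p (\<kappa> choose b) = multiplicity p ((b + (\<kappa> - b)) choose b)"
    using b by simp
  also have "\<dots> = (\<Sum>j\<in>{1..B}. (b mod p ^ j + (\<kappa> - b) mod p ^ j) div p ^ j)"
    using b by (intro multiplicity_binomial_carries[OF p]) (simp add: B_def)
  also have "\<dots> \<le> (\<Sum>j\<in>{1..B}. ((p ^ d * K + b) mod p ^ j + (\<kappa> - b) mod p ^ j) div p ^ j)"
    by (intro sum_mono carry)
  also have "\<dots> = multiplicity p (((p ^ d * K + b) + (\<kappa> - b)) choose (p ^ d * K + b))"
    using b by (intro multiplicity_binomial_carries[OF p, symmetric]) (simp add: B_def)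
  also have "(p ^ d * K + b) + (\<kappa> - b) = p ^ d * K + \<kappa>"
    using b by simp
  finally show ?thesis .
qed

section \<open>The weights\<close>

definition weight :: "nat \<Rightarrow> nat \<Rightarrow> int \<Rightarrow> nat \<Rightarrow> nat" where
  "weight p \<alpha> r k = fact (flr p \<alpha> k) * (nat (frc p \<alpha> r + frc p \<alpha> (int k - r)) choose nat (frc p \<alpha> r))"

lemma weight_0: "weight p 0 r k = fact (p * k)"
  by (simp add: weight_def flr_def frc_def)

lemma weight_Suc:
  assumes "p > 0"
  shows "weight p (Suc \<alpha>) r k = fact (k div p ^ \<alpha>) *
    ((nat (r mod (int p ^ \<alpha>)) + nat ((int k - r) mod (int p ^ \<alpha>))) choose nat (r mod (int p ^ \<alpha>)))"
proof -
  have "0 \<le> r mod (int p ^ \<alpha>)" "0 \<le> (int k - r) mod (int p ^ \<alpha>)"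
    using assms by simp_all
  then show ?thesis by (simp add: weight_def flr_def frc_def nat_add_distrib)
qed

lemma weight_ne_zero: "p > 0 \<Longrightarrow> weight p \<alpha> r k \<noteq> 0"
  by (cases \<alpha>) (simp_all add: weight_0 weight_Suc)

lemma weight_Suc_mod: "p > 0 \<Longrightarrow> weight p (Suc \<alpha>) (r mod (int p ^ \<alpha>)) k = weight p (Suc \<alpha>) r k"
  by (simp add: weight_Suc mod_diff_right_eq)

lemma weight_Suc_of_nat:
  assumes "p > 0" "b < p ^ \<alpha>"
  shows "weight p (Suc \<alpha>) (int b) k
    = fact (k div p ^ \<alpha>) * ((b + nat ((int k - int b) mod (int p ^ \<alpha>))) choose b)"
proof -
  have "int b mod (int p ^ \<alpha>) = int b"
    using assms(2) by (simp flip: of_nat_power)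
  then show ?thesis using weight_Suc[OF assms(1)] by simp
qed

text \<open>Passing from \<open>\<alpha> + 1\<close> to \<open>\<alpha>\<close> multiplies the factorial part by at least \<open>p ^ (k div p ^ \<alpha>)\<close>,
  while the binomial part loses at most one factor \<open>p\<close>.\<close>

lemma multiplicity_weight_Suc_le:
  assumes p: "prime p" and b: "b < p ^ \<alpha>"
  shows "multiplicity p (weight p (Suc \<alpha>) (int b) k) + k div p ^ \<alpha>
    \<le> multiplicity p (weight p \<alpha> (int b) k) + 1"
proof (cases \<alpha>)
  case 0
  then show ?thesis
    using b multiplicity_fact_prime_mult[OF p, of k] prime_gt_0_nat[OF p]
    by (simp add: weight_0 weight_Suc)
next
  case (Suc d)
  have p0: "p > 0" using prime_gt_0_nat[OF p] .
  define q where "q = p ^ Suc d"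
  define \<sigma> where "\<sigma> = nat ((int k - int b) mod int q)"
  define K where "K = k div q"
  have bq: "b < p ^ Suc d" and \<sigma>q: "\<sigma> < p ^ Suc d"
    using b p0 Suc by (simp_all add: \<sigma>_def q_def nat_less_iff)
  have "int (p ^ d) dvd int q" by (simp add: q_def)
  then have "(int k - int b) mod int (p ^ d) = ((int k - int b) mod int q) mod int (p ^ d)"
    by (simp add: mod_mod_cancel)
  then have \<sigma>': "nat ((int k - int b) mod (int p ^ d)) = \<sigma> mod p ^ d"
    using p0 by (simp add: \<sigma>_def nat_mod_distrib q_def flip: of_nat_power)
  have "weight p \<alpha> (int b) k = fact (k div p ^ d) * ((b mod p ^ d + \<sigma> mod p ^ d) choose (b mod p ^ d))"
    using weight_Suc[OF p0, of d "int b" k] \<sigma>' Suc by (simp flip: of_nat_power zmod_int)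
  then have w\<alpha>: "multiplicity p (weight p \<alpha> (int b) k)
      = multiplicity p (fact (k div p ^ d) :: nat) + multiplicity p ((b mod p ^ d + \<sigma> mod p ^ d) choose (b mod p ^ d))"
    using p by (simp add: prime_elem_multiplicity_mult_distrib)
  have "weight p (Suc \<alpha>) (int b) k = fact K * ((b + \<sigma>) choose b)"
    using weight_Suc_of_nat[OF p0 b] Suc by (simp add: K_def \<sigma>_def q_def)
  then have wSuc: "multiplicity p (weight p (Suc \<alpha>) (int b) k)
      = multiplicity p (fact K :: nat) + multiplicity p ((b + \<sigma>) choose b)"
    using p by (simp add: prime_elem_multiplicity_mult_distrib)
  have "K = k div p ^ d div p"
    by (simp add: K_def q_def div_mult2_eq power_Suc2 del: power_Suc)
  then have "p * K \<le> k div p ^ d"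
    by (simp add: times_div_less_eq_dividend)
  then have "multiplicity p (fact (p * K) :: nat) \<le> multiplicity p (fact (k div p ^ d) :: nat)"
    by (intro dvd_imp_multiplicity_le fact_dvd) simp_all
  then have "K + multiplicity p (fact K :: nat) \<le> multiplicity p (fact (k div p ^ d) :: nat)"
    using multiplicity_fact_prime_mult[OF p, of K] by simp
  then show ?thesis
    using wSuc w\<alpha> multiplicity_binomial_le_truncation[OF p bq \<sigma>q] Suc by (simp add: K_def q_def)
qed

section \<open>Divisibility of binomial transforms by the weights\<close>

definition progression_power :: "nat \<Rightarrow> nat \<Rightarrow> int \<Rightarrow> nat \<Rightarrow> nat \<Rightarrow> int" where
  "progression_power p \<alpha> r i n =
     (if [int n = r] (mod int p ^ \<alpha>) then int p ^ i * ((int n - r) div int p ^ \<alpha>) ^ i else 0)"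

definition progression_falling_fact :: "nat \<Rightarrow> nat \<Rightarrow> nat \<Rightarrow> nat \<Rightarrow> int" where
  "progression_falling_fact q b u n = (if n mod q = b then falling_fact (int (n div q)) u else 0)"

lemma progression_power_of_nat:
  assumes "b < p ^ \<alpha>"
  shows "progression_power p \<alpha> (int b) i n
    = (if n mod p ^ \<alpha> = b then int p ^ i * int (n div p ^ \<alpha>) ^ i else 0)"
proof -
  have "[int n = int b] (mod int p ^ \<alpha>) \<longleftrightarrow> n mod p ^ \<alpha> = b"
    using assms by (simp add: cong_def flip: of_nat_power zmod_int)
  moreover have "(int n - int b) div int p ^ \<alpha> = int (n div p ^ \<alpha>)" if "n mod p ^ \<alpha> = b"
  proof -
    have "int n - int b = int p ^ \<alpha> * int (n div p ^ \<alpha>)"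
      using that by (metis add_diff_cancel_right' div_mult_mod_eq mult.commute of_nat_add
          of_nat_mult of_nat_power)
    moreover have "int (p ^ \<alpha>) \<noteq> 0" using assms by (metis gr_implies_not0 of_nat_eq_0_iff)
    ultimately show ?thesis by simp
  qed
  ultimately show ?thesis
    using assms by (auto simp: progression_power_def)
qed

definition weight_dvd_transform :: "nat \<Rightarrow> nat \<Rightarrow> int \<Rightarrow> (nat \<Rightarrow> int) \<Rightarrow> bool" where
  "weight_dvd_transform p \<alpha> r g \<longleftrightarrow>
     (\<forall>k. int p ^ multiplicity p (weight p \<alpha> r k) dvd binomial_transform g k)"

lemma weight_dvd_transform_sum:
  "(\<And>i. i \<in> I \<Longrightarrow> weight_dvd_transform p \<alpha> r (g i)) \<Longrightarrow>
   weight_dvd_transform p \<alpha> r (\<lambda>n. \<Sum>i\<in>I. g i n)"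
  unfolding weight_dvd_transform_def binomial_transform_sum by (auto intro: dvd_sum)

lemma weight_dvd_transform_cmult:
  "weight_dvd_transform p \<alpha> r g \<Longrightarrow> weight_dvd_transform p \<alpha> r (\<lambda>n. c * g n)"
  unfolding weight_dvd_transform_def binomial_transform_cmult by auto

lemma weight_dvd_transform_progression_power_0:
  assumes p: "prime p"
  shows "weight_dvd_transform p 0 r (progression_power p 0 r i)"
  unfolding weight_dvd_transform_def
proof
  fix k
  obtain d where d: "\<And>x :: int. (x - r) ^ i = (\<Sum>u\<le>i. d u * falling_fact x u)"
    using power_diff_eq_falling_fact_combination by blast
  have "progression_power p 0 r i = (\<lambda>n. int p ^ i * (\<Sum>u\<le>i. d u * falling_fact (int n) u))"
    by (simp add: progression_power_def d[symmetric] fun_eq_iff)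
  then have "binomial_transform (progression_power p 0 r i) k
      = int p ^ i * (\<Sum>u\<le>i. d u * binomial_transform (\<lambda>n. falling_fact (of_nat n) u) k)"
    by (simp add: binomial_transform_sum binomial_transform_cmult)
  also have "\<dots> = int p ^ i * (\<Sum>u\<le>i. if k = u then d k * ((-1) ^ k * fact k) else 0)"
    by (intro arg_cong[where f = "\<lambda>s. int p ^ i * s"] sum.cong)
      (simp_all add: binomial_transform_falling_fact)
  also have "\<dots> = (if k \<le> i then (-1) ^ k * d k * int (p ^ i * fact k) else 0)"
    by (simp add: sum.delta)
  finally have transform: "binomial_transform (progression_power p 0 r i) k = \<dots>" .
  have "int p ^ multiplicity p (weight p 0 r k) dvd int (p ^ i * fact k)" if "k \<le> i"
    using that p multiplicity_fact_prime_mult[OF p, of k]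
    by (subst int_prime_power_dvd_iff[OF p]) (simp_all add: weight_0 prime_elem_multiplicity_mult_distrib)
  then show "int p ^ multiplicity p (weight p 0 r k) dvd binomial_transform (progression_power p 0 r i) k"
    unfolding transform by (auto intro: dvd_mult simp del: of_nat_mult)
qed

lemma binomial_transform_progression_falling_fact_large:
  assumes b: "b < q" and u: "k div q \<le> u"
  shows "binomial_transform (progression_falling_fact q b u) k =
    (if u = k div q \<and> b \<le> k mod q
     then (-1) ^ (b + q * (k div q)) * int (fact (k div q) * (k choose (b + q * (k div q))))
     else 0)"
proof -
  define K where "K = k div q"
  have vanish: "progression_falling_fact q b u j = 0" if "j \<le> k" "j \<noteq> b + q * K" for j
  proof (cases "j mod q = b")
    case True
    have "j div q \<le> K" using that(1) by (simp add: K_def div_le_mono)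
    moreover have "j div q \<noteq> K"
      using True that(2) by (metis div_mult_mod_eq add.commute mult.commute)
    ultimately have "j div q < u" using u K_def by simp
    then show ?thesis using True by (simp add: progression_falling_fact_def falling_fact_of_nat_eq_0)
  qed (simp add: progression_falling_fact_def)
  have top: "progression_falling_fact q b v (b + q * K) = falling_fact (int K) v" for v
    using b by (simp add: progression_falling_fact_def)
  have "b + q * K \<le> k \<longleftrightarrow> b \<le> k mod q"
    unfolding K_def using mult_div_mod_eq[of q k] by arith
  then show ?thesis
    unfolding K_def[symmetric] using u falling_fact_of_nat_eq_0[of K u]
    by (auto simp: binomial_transform_single[OF vanish] top falling_fact_of_nat_self K_def[symmetric])
qed

lemma multiplicity_weight_Suc_le_binomial:
  assumes p: "prime p" and b: "b \<le> k mod p ^ \<alpha>"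
  shows "multiplicity p (weight p (Suc \<alpha>) (int b) k)
    \<le> multiplicity p (fact (k div p ^ \<alpha>) * (k choose (b + p ^ \<alpha> * (k div p ^ \<alpha>))))"
proof -
  define q where "q = p ^ \<alpha>"
  define K where "K = k div q"
  define \<kappa> where "\<kappa> = k mod q"
  have p0: "p > 0" using prime_gt_0_nat[OF p] .
  have \<kappa>q: "\<kappa> < q" using p0 by (simp add: \<kappa>_def q_def)
  have b\<kappa>: "b \<le> \<kappa>" using b by (simp add: \<kappa>_def q_def)
  have k: "k = q * K + \<kappa>" by (simp add: K_def \<kappa>_def)
  have "int k - int b = int (\<kappa> - b) + int K * int q"
    using b\<kappa> by (subst k) (simp add: of_nat_diff)
  then have "nat ((int k - int b) mod (int p ^ \<alpha>)) = \<kappa> - b"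
    using \<kappa>q by (simp add: q_def)
  then have "weight p (Suc \<alpha>) (int b) k = fact K * (\<kappa> choose b)"
    using weight_Suc_of_nat[OF p0, of b \<alpha> k] b\<kappa> \<kappa>q by (simp add: K_def q_def)
  moreover have "multiplicity p (\<kappa> choose b) \<le> multiplicity p ((q * K + \<kappa>) choose (q * K + b))"
    using multiplicity_binomial_le_prepend[OF p b\<kappa>] \<kappa>q by (simp add: q_def)
  moreover have "(q * K + \<kappa>) choose (q * K + b) = k choose (b + q * K)"
    using k by (simp add: add.commute)
  moreover have "k choose (b + q * K) \<noteq> 0"
    using k b\<kappa> by simp
  ultimately show ?thesis
    using p b\<kappa> unfolding q_def[symmetric] K_def[symmetric]
    by (simp add: prime_elem_multiplicity_mult_distrib)
qed

lemma weight_dvd_binomial_transform_falling_fact_large: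
  assumes p: "prime p" and b: "b < p ^ \<alpha>" and u: "k div p ^ \<alpha> \<le> u"
  shows "int p ^ multiplicity p (weight p (Suc \<alpha>) (int b) k)
    dvd binomial_transform (progression_falling_fact (p ^ \<alpha>) b u) k"
proof (cases "u = k div p ^ \<alpha> \<and> b \<le> k mod p ^ \<alpha>")
  case True
  let ?K = "k div p ^ \<alpha>"
  have "b + p ^ \<alpha> * ?K \<le> k"
    using True mult_div_mod_eq[of "p ^ \<alpha>" k] by linarith
  then have "int p ^ multiplicity p (weight p (Suc \<alpha>) (int b) k)
      dvd int (fact ?K * (k choose (b + p ^ \<alpha> * ?K)))"
    using multiplicity_weight_Suc_le_binomial[OF p, of b k \<alpha>] True
    by (subst int_prime_power_dvd_iff[OF p]) simp_all
  then show ?thesis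
    unfolding binomial_transform_progression_falling_fact_large[OF b u] using True by simp
next
  case False
  then show ?thesis
    unfolding binomial_transform_progression_falling_fact_large[OF b u] if_not_P[OF False] by simp
qed

lemma weight_dvd_binomial_transform_falling_fact_small:
  assumes p: "prime p" and b: "b < p ^ \<alpha>" and u: "u < k div p ^ \<alpha>"
    and IH: "\<And>i. weight_dvd_transform p \<alpha> (int b) (progression_power p \<alpha> (int b) i)"
  shows "int p ^ multiplicity p (weight p (Suc \<alpha>) (int b) k)
    dvd binomial_transform (progression_falling_fact (p ^ \<alpha>) b u) k"
proof -
  obtain s where s: "\<And>x :: int. falling_fact x u = (\<Sum>i\<le>u. s i * x ^ i)"
    using falling_fact_eq_polynomial by blast
  define pw where "pw i n = (if n mod p ^ \<alpha> = b then int (n div p ^ \<alpha>) ^ i else 0)" for i n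
  have pff: "progression_falling_fact (p ^ \<alpha>) b u = (\<lambda>n. \<Sum>i\<le>u. s i * pw i n)"
    by (simp add: fun_eq_iff progression_falling_fact_def pw_def s)
  have pp: "progression_power p \<alpha> (int b) i = (\<lambda>n. int p ^ i * pw i n)" for i
    using b by (simp add: fun_eq_iff progression_power_of_nat pw_def)
  let ?v = "multiplicity p (weight p (Suc \<alpha>) (int b) k)"
  have "int p ^ ?v dvd binomial_transform (pw i) k" if "i \<le> u" for i
  proof -
    have "?v + i \<le> multiplicity p (weight p \<alpha> (int b) k)"
      using multiplicity_weight_Suc_le[OF p b, of k] that u by linarith
    then have "int p ^ (?v + i) dvd int p ^ multiplicity p (weight p \<alpha> (int b) k)"
      by (rule le_imp_power_dvd)
    also have "\<dots> dvd binomial_transform (progression_power p \<alpha> (int b) i) k"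
      using IH[of i] unfolding weight_dvd_transform_def by blast
    also have "\<dots> = int p ^ i * binomial_transform (pw i) k"
      by (simp add: pp binomial_transform_cmult)
    finally show ?thesis
      using prime_gt_0_nat[OF p] by (simp add: power_add mult.commute)
  qed
  then show ?thesis
    unfolding pff binomial_transform_sum binomial_transform_cmult by (auto intro!: dvd_sum dvd_mult)
qed

lemma euler_theorem_prime_power:
  assumes p: "prime p" and y: "\<not> int p dvd y"
  shows "[y ^ totient (p ^ e) = 1] (mod int p ^ e)"
proof (cases "e = 0")
  case False
  have "residues (int p ^ e)"
    using prime_gt_1_nat[OF p] False by unfold_locales simp
  moreover have "coprime y (int p ^ e)"
    using prime_imp_coprime[of "int p" y] y p by (simp add: coprime_commute)
  ultimately show ?thesis
    using residues.euler_theorem by (fastforce simp flip: of_nat_power)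
qed simp

text \<open>Euler's theorem turns the indicator of \<open>p dvd y\<close> into a polynomial in \<open>y\<close> modulo \<open>p ^ e\<close>.\<close>

lemma cong_power_indicator:
  assumes p: "prime p"
  shows "[(if int p dvd y then y ^ i else 0) = y ^ i - y ^ (i + totient (p ^ e) * e)] (mod int p ^ e)"
proof (cases "int p dvd y")
  case True
  have "1 \<le> totient (p ^ e)"
    using prime_gt_0_nat[OF p] by (simp add: Suc_le_eq)
  from mult_le_mono1[OF this, of e] have "e \<le> i + totient (p ^ e) * e"
    by linarith
  then have "int p ^ e dvd y ^ (i + totient (p ^ e) * e)"
    using True by (rule dvd_power_le[rotated])
  then show ?thesis
    using True by (simp add: cong_iff_dvd_diff)
next
  case False
  have "[y ^ totient (p ^ e) = 1] (mod int p ^ e)"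
    using euler_theorem_prime_power[OF p False] .
  then have "[y ^ i * (y ^ totient (p ^ e)) ^ e = y ^ i * 1] (mod int p ^ e)"
    by (intro cong_mult cong_refl) (metis cong_pow power_one)
  then show ?thesis
    using False by (simp add: cong_iff_dvd_diff power_add power_mult)
qed

lemma progression_power_Suc_eq:
  assumes p: "p > 0" and b: "b < p ^ \<alpha>" and r: "r = int (p ^ \<alpha>) * c + int b"
  shows "progression_power p (Suc \<alpha>) r i n =
    (if n mod p ^ \<alpha> = b \<and> int p dvd int (n div p ^ \<alpha>) - c then (int (n div p ^ \<alpha>) - c) ^ i else 0)"
proof -
  define q where "q = p ^ \<alpha>"
  define y where "y = int (n div q) - c"
  have q0: "q > 0" using p by (simp add: q_def)
  have "int n = int q * int (n div q) + int (n mod q)"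
    by (simp flip: of_nat_mult of_nat_add)
  then have n: "int n - r = int q * y + (int (n mod q) - int b)"
    using r by (simp add: y_def q_def algebra_simps)
  have pq: "int p ^ Suc \<alpha> = int q * int p"
    by (simp add: q_def)
  show ?thesis
  proof (cases "n mod q = b")
    case True
    then have ny: "int n - r = int q * y" using n by simp
    have "[int n = r] (mod int p ^ Suc \<alpha>) \<longleftrightarrow> int p dvd y"
      unfolding pq cong_iff_dvd_diff ny using q0 by simp
    moreover have "int p ^ i * ((int n - r) div int p ^ Suc \<alpha>) ^ i = y ^ i" if py: "int p dvd y"
    proof -
      obtain z where z: "y = int p * z" using py by (rule dvdE)
      then have "(int n - r) div int p ^ Suc \<alpha> = z"
        unfolding pq ny using q0 p by (simp add: mult.assoc)
      then show ?thesis by (simp add: z power_mult_distrib)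
    qed
    ultimately show ?thesis
      using True by (simp add: progression_power_def y_def q_def)
  next
    case False
    have "\<not> [int n = r] (mod int p ^ Suc \<alpha>)"
    proof
      assume "[int n = r] (mod int p ^ Suc \<alpha>)"
      then have "int q * int p dvd int n - r" by (simp only: pq cong_iff_dvd_diff)
      then have "int q dvd int n - r" by (rule dvd_mult_left)
      then have "int q dvd int (n mod q) - int b" using n by (simp add: dvd_add_right_iff)
      then have "[n mod q = b] (mod q)" by (simp add: cong_iff_dvd_diff flip: cong_int_iff)
      then show False using False b by (simp add: cong_def q_def)
    qed
    then show ?thesis using False by (simp add: progression_power_def q_def)
  qed
qed

lemma weight_dvd_transform_shifted_power:
  assumes "\<And>u. weight_dvd_transform p \<alpha> r (progression_falling_fact q b u)"
  shows "weight_dvd_transform p \<alpha> r (\<lambda>n. if n mod q = b then (int (n div q) - c) ^ j else 0)"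
proof -
  obtain d where d: "\<And>x :: int. (x - c) ^ j = (\<Sum>u\<le>j. d u * falling_fact x u)"
    using power_diff_eq_falling_fact_combination by blast
  have "(\<lambda>n. if n mod q = b then (int (n div q) - c) ^ j else 0)
      = (\<lambda>n. \<Sum>u\<le>j. d u * progression_falling_fact q b u n)"
    by (simp add: fun_eq_iff progression_falling_fact_def d)
  then show ?thesis
    by (simp add: weight_dvd_transform_sum weight_dvd_transform_cmult assms)
qed

lemma weight_dvd_transform_progression_power_Suc:
  assumes p: "prime p"
    and H: "\<And>b u. b < p ^ \<alpha> \<Longrightarrow>
      weight_dvd_transform p (Suc \<alpha>) (int b) (progression_falling_fact (p ^ \<alpha>) b u)"
  shows "weight_dvd_transform p (Suc \<alpha>) r (progression_power p (Suc \<alpha>) r i)"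
proof -
  define q where "q = p ^ \<alpha>"
  define b where "b = nat (r mod int q)"
  define c where "c = r div int q"
  have p0: "p > 0" using prime_gt_0_nat[OF p] .
  have rb: "int b = r mod int q" using p0 by (simp add: b_def q_def)
  have bq: "b < p ^ \<alpha>" using p0 by (simp add: b_def q_def nat_less_iff)
  have r: "r = int (p ^ \<alpha>) * c + int b" by (simp add: rb c_def q_def)
  have weight_b: "weight p (Suc \<alpha>) r k = weight p (Suc \<alpha>) (int b) k" for k
    using weight_Suc_mod[OF p0] by (simp add: rb q_def)
  define G where "G j n = (if n mod p ^ \<alpha> = b then (int (n div p ^ \<alpha>) - c) ^ j else 0)" for j n
  have G: "weight_dvd_transform p (Suc \<alpha>) (int b) (G j)" for j
    unfolding G_def by (rule weight_dvd_transform_shifted_power[OF H[OF bq]])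
  show ?thesis
    unfolding weight_dvd_transform_def
  proof
    fix k
    define e where "e = multiplicity p (weight p (Suc \<alpha>) r k)"
    define M where "M = totient (p ^ e) * e"
    have "[progression_power p (Suc \<alpha>) r i n = G i n - G (i + M) n] (mod int p ^ e)" for n
      using cong_power_indicator[OF p, of "int (n div p ^ \<alpha>) - c" i e]
      by (cases "n mod p ^ \<alpha> = b") (simp_all add: progression_power_Suc_eq[OF p0 bq r] G_def M_def)
    then have "[binomial_transform (progression_power p (Suc \<alpha>) r i) k
        = binomial_transform (G i) k - binomial_transform (G (i + M)) k] (mod int p ^ e)"
      unfolding binomial_transform_diff[symmetric] by (rule cong_binomial_transform)
    moreover have "int p ^ e dvd binomial_transform (G i) k - binomial_transform (G (i + M)) k"
      using G[of i] G[of "i + M"] weight_b by (simp add: weight_dvd_transform_def e_def dvd_diff)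
    ultimately show "int p ^ e dvd binomial_transform (progression_power p (Suc \<alpha>) r i) k"
      using cong_dvd_iff by blast
  qed
qed

theorem weight_dvd_transform_progression_power:
  assumes p: "prime p"
  shows "weight_dvd_transform p \<alpha> r (progression_power p \<alpha> r i)"
proof (induction \<alpha> arbitrary: r i)
  case 0
  show ?case by (rule weight_dvd_transform_progression_power_0[OF p])
next
  case (Suc \<alpha>)
  show ?case
  proof (rule weight_dvd_transform_progression_power_Suc[OF p])
    fix b u assume b: "b < p ^ \<alpha>"
    show "weight_dvd_transform p (Suc \<alpha>) (int b) (progression_falling_fact (p ^ \<alpha>) b u)"
      unfolding weight_dvd_transform_def
      using weight_dvd_binomial_transform_falling_fact_large[OF p b]
        weight_dvd_binomial_transform_falling_fact_small[OF p b _ Suc.IH] by (meson not_le)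
  qed
qed

section \<open>Solving in the \<open>p\<close>-adic integers\<close>

lemma padic_int_const: "padic_int p (\<lambda>_. z)"
  by (simp add: padic_int_def)

lemma padic_int_mult: "padic_int p x \<Longrightarrow> padic_int p y \<Longrightarrow> padic_int p (\<lambda>m. x m * y m)"
  unfolding padic_int_def by (auto intro: cong_mult)

lemma padic_int_sum: "(\<And>i. i \<in> I \<Longrightarrow> padic_int p (x i)) \<Longrightarrow> padic_int p (\<lambda>m. \<Sum>i\<in>I. x i m)"
  unfolding padic_int_def by (auto intro: cong_sum)

lemma padic_unit_inverse:
  assumes p: "prime p" and u: "\<not> int p dvd u"
  shows "\<exists>v. padic_int p v \<and> (\<forall>m. [u * v m = 1] (mod int p ^ m))"
proof -
  define v where "v m = u ^ (totient (p ^ m) - 1)" for m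
  have inverse: "[u * v m = 1] (mod int p ^ m)" for m
  proof -
    have "0 < totient (p ^ m)"
      using prime_gt_0_nat[OF p] by simp
    then have "u * v m = u ^ totient (p ^ m)"
      by (simp add: v_def power_Suc[symmetric] del: power_Suc)
    then show ?thesis
      using euler_theorem_prime_power[OF p u] by simp
  qed
  have "padic_int p v"
    unfolding padic_int_def
  proof
    fix m
    have "[u * v (Suc m) = 1] (mod int p ^ m)"
      using inverse[of "Suc m"] by (rule cong_dvd_modulus) simp
    then have "[u * v (Suc m) = u * v m] (mod int p ^ m)"
      using inverse[of m] by (metis cong_sym cong_trans)
    moreover have "coprime u (int p ^ m)"
      using prime_imp_coprime[of "int p" u] u p by (simp add: coprime_commute)
    ultimately show "[v (Suc m) = v m] (mod int p ^ m)"
      by (simp add: cong_mult_lcancel)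
  qed
  with inverse show ?thesis by blast
qed

lemma padic_weighted_binomial_transform_solvable:
  fixes w :: "nat \<Rightarrow> nat" and c g :: "'i \<Rightarrow> nat \<Rightarrow> int"
  assumes p: "prime p"
    and c: "\<And>i. i \<in> I \<Longrightarrow> padic_int p (c i)"
    and w: "\<And>k. w k \<noteq> 0"
    and dvd: "\<And>i k. i \<in> I \<Longrightarrow> int p ^ multiplicity p (w k) dvd binomial_transform (g i) k"
  shows "\<exists>a. (\<forall>k. padic_int p (a k)) \<and>
    (\<forall>n m. [binomial_transform (\<lambda>k. int (w k) * a k m) n = (\<Sum>i\<in>I. c i m * g i n)] (mod int p ^ m))"
proof -
  define E where "E k = multiplicity p (w k)" for k
  define u where "u k = w k div p ^ E k" for k
  have w_eq: "w k = p ^ E k * u k" for k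
    by (simp add: u_def E_def multiplicity_dvd)
  have "\<not> int p dvd int (u k)" for k
    using multiplicity_decompose[of "w k" p] w[of k] prime_gt_1_nat[OF p] by (simp add: u_def E_def)
  then have "\<forall>k. \<exists>v. padic_int p v \<and> (\<forall>m. [int (u k) * v m = 1] (mod int p ^ m))"
    using padic_unit_inverse[OF p] by blast
  then obtain v where v: "\<And>k. padic_int p (v k)" "\<And>k m. [int (u k) * v k m = 1] (mod int p ^ m)"
    by metis
  define y where "y k m = (\<Sum>i\<in>I. c i m * (binomial_transform (g i) k div int p ^ E k))" for k m
  define a where "a k m = y k m * v k m" for k m
  have "padic_int p (a k)" for k
    unfolding a_def y_def
    by (intro padic_int_mult padic_int_sum v c padic_int_const)
  moreover have "[binomial_transform (\<lambda>k. int (w k) * a k m) n = (\<Sum>i\<in>I. c i m * g i n)] (mod int p ^ m)"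
    for n m
  proof -
    have "int p ^ E k * y k m = (\<Sum>i\<in>I. c i m * binomial_transform (g i) k)" for k
      unfolding y_def sum_distrib_left
      by (intro sum.cong refl) (use dvd in \<open>simp add: E_def algebra_simps\<close>)
    then have "[int (w k) * a k m = (\<Sum>i\<in>I. c i m * binomial_transform (g i) k)] (mod int p ^ m)" for k
      using cong_mult[OF cong_refl v(2), of "int p ^ E k * y k m" k m]
      by (simp add: a_def w_eq algebra_simps)
    then have "[binomial_transform (\<lambda>k. int (w k) * a k m) n
        = binomial_transform (\<lambda>k. \<Sum>i\<in>I. c i m * binomial_transform (g i) k) n] (mod int p ^ m)"
      by (intro cong_binomial_transform)
    then show ?thesis
      by (simp add: binomial_transform_sum binomial_transform_cmult binomial_transform_involution)
  qed
  ultimately show ?thesis by blast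
qed

lemma lhs_comp_eq_binomial_transform:
  "lhs_comp p \<alpha> r a n m = binomial_transform (\<lambda>k. int (weight p \<alpha> r k) * a k m) n"
  by (simp add: lhs_comp_def binomial_transform_def weight_def mult.assoc)

lemma rhs_comp_eq_sum_progression_power:
  "rhs_comp p \<alpha> r l c n m = (\<Sum>i\<le>l. c i m * int p ^ (l - i) * progression_power p \<alpha> r i n)"
proof -
  have "int p ^ l = int p ^ (l - i) * int p ^ i" if "i \<le> l" for i
    using that by (simp flip: power_add)
  then show ?thesis
    by (auto simp: rhs_comp_def progression_power_def sum_distrib_left power_mult_distrib
        intro!: sum.cong)
qed

theorem theorem1p4:
  fixes p \<alpha> l :: nat and r :: int and c :: "nat \<Rightarrow> nat \<Rightarrow> int"
  assumes "prime p"
    and "\<And>i. i \<le> l \<Longrightarrow> padic_int p (c i)"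
    and "\<not> padic_eq p (c l) (\<lambda>_. 0)"
  shows "\<exists>a :: nat \<Rightarrow> nat \<Rightarrow> int. (\<forall>k. padic_int p (a k)) \<and>
           (\<forall>n. padic_eq p (lhs_comp p \<alpha> r a n) (rhs_comp p \<alpha> r l c n))"
proof -
  have "\<exists>a. (\<forall>k. padic_int p (a k)) \<and>
    (\<forall>n m. [binomial_transform (\<lambda>k. int (weight p \<alpha> r k) * a k m) n
      = (\<Sum>i\<le>l. (c i m * int p ^ (l - i)) * progression_power p \<alpha> r i n)] (mod int p ^ m))"
  proof (rule padic_weighted_binomial_transform_solvable)
    show "padic_int p (\<lambda>m. c i m * int p ^ (l - i))" if "i \<in> {..l}" for i
      using that assms(2) by (simp add: padic_int_mult padic_int_const)
    show "weight p \<alpha> r k \<noteq> 0" for k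
      using prime_gt_0_nat[OF assms(1)] by (rule weight_ne_zero)
    show "int p ^ multiplicity p (weight p \<alpha> r k) dvd binomial_transform (progression_power p \<alpha> r i) k"
      for i k
      using weight_dvd_transform_progression_power[OF assms(1)] by (simp add: weight_dvd_transform_def)
  qed (rule assms(1))
  then show ?thesis
    by (simp add: padic_eq_def lhs_comp_eq_binomial_transform rhs_comp_eq_sum_progression_power)
qed

end
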